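(* Let $a\in L_1(\mathbb R^d)$ have compact support. If $F_a(u,v)=\int_{\mathbb R^d}a(x)u(x)\overline{v(x)}\,dx=0$ for all $u,v\in\mathcal H$, then $a=0$ almost everywhere.
   Context: Let $d\ge 2$, $\mathbb S=S^{d-1}$ with surface measure $dS$, $c_d=\sqrt{\pi}/(2\pi)^{d/2}$, and for $\varphi\in L_2(\mathbb S)$, $(I\varphi)(x)=c_d\int_{\mathbb S}\varphi(\xi)e^{ix\cdot\xi}dS(\xi)$, $x\in\mathbb R^d$. The Herglotz space is $\mathcal H=\{I\varphi:\varphi\in L_2(\mathbb S)\}$ (its elements are bounded smooth functions solving $\Delta u+u=0$). *)

theory Defs
  imports "HOL-Analysis.Analysis"
begin

text \<open>Surface measure on the unit sphere S^{d-1} of a Euclidean space of dimension d,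
  via the cone construction: sigma(A) = d * lambda({t x. 0 < t <= 1, x in A}).\<close>
definition sphere_surface_measure :: "'a::euclidean_space measure" where
  "sphere_surface_measure =
     density (distr (restrict_space lborel (ball 0 1 - {0}))
                    (restrict_space borel (sphere 0 1))
                    (\<lambda>x. x /\<^sub>R norm x))
             (\<lambda>_. ennreal (real DIM('a)))"

definition L2_sphere :: "('a::euclidean_space \<Rightarrow> complex) set" where
  "L2_sphere = {\<phi>. \<phi> \<in> borel_measurable (sphere_surface_measure :: 'a measure) \<and>
      integrable (sphere_surface_measure :: 'a measure) (\<lambda>\<xi>. (norm (\<phi> \<xi>))\<^sup>2)}"

definition herglotz_const :: "nat \<Rightarrow> real" where
  "herglotz_const d = sqrt pi / (2 * pi) powr (real d / 2)"

definition herglotz_op :: "('a::euclidean_space \<Rightarrow> complex) \<Rightarrow> 'a \<Rightarrow> complex" where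
  "herglotz_op \<phi> x = complex_of_real (herglotz_const DIM('a)) *
     integral\<^sup>L (sphere_surface_measure :: 'a measure) (\<lambda>\<xi>. \<phi> \<xi> * cis (x \<bullet> \<xi>))"

definition herglotz_space :: "('a::euclidean_space \<Rightarrow> complex) set" where
  "herglotz_space = {u. \<exists>\<phi>\<in>L2_sphere. u = herglotz_op \<phi>}"

end

theory Submission
  imports Defs "HOL-Complex_Analysis.Cauchy_Integral_Formula"
begin

text \<open>Taking for \<open>u\<close> and \<open>v\<close> the Herglotz waves of indicators of small caps around unit vectors
  \<open>\<xi>\<close> and \<open>\<eta>\<close>, the hypothesis says that the Fourier transform \<open>\<zeta> \<mapsto> \<integral> a(x) exp(i x\<cdot>\<zeta>) dx\<close> of \<open>a\<close> has mean zero
  over the differences of points of the two caps; letting the caps shrink, it vanishes at \<open>\<xi> - \<eta>\<close>.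
  For \<open>d \<ge> 2\<close> every \<open>\<zeta>\<close> with \<open>|\<zeta>| < 2\<close> is such a difference. Since \<open>a\<close> has compact support,
  the Fourier transform is given along every ray by an everywhere convergent power series, so it
  vanishes identically. Then \<open>a\<close> integrates to zero against trigonometric polynomials, hence by
  Stone-Weierstrass against continuous functions, hence against all Borel sets.\<close>

lemma integrable_mult_bounded:
  fixes a h :: "'m \<Rightarrow> complex"
  assumes a: "integrable M a" and h: "h \<in> borel_measurable M" and bound: "\<And>x. norm (h x) \<le> B"
  shows "integrable M (\<lambda>x. a x * h x)"
proof (rule Bochner_Integration.integrable_bound)
  show "integrable M (\<lambda>x. B *\<^sub>R a x)"
    using a by simp
  show "(\<lambda>x. a x * h x) \<in> borel_measurable M"
    using a h by measurable
  have "B \<ge> 0"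
    using bound[of undefined] norm_ge_zero order_trans by blast
  have "norm (a x) * norm (h x) \<le> norm (a x) * B" for x
    using bound by (intro mult_left_mono) auto
  with \<open>B \<ge> 0\<close> show "AE x in M. norm (a x * h x) \<le> norm (B *\<^sub>R a x)"
    by (intro AE_I2) (simp add: norm_mult mult.commute)
qed

lemma integrable_scaleR_bounded:
  fixes a :: "'m \<Rightarrow> complex"
  assumes a: "integrable M a" and h: "h \<in> borel_measurable M" and bound: "\<And>x. \<bar>h x\<bar> \<le> B"
  shows "integrable M (\<lambda>x. h x *\<^sub>R a x)"
  using integrable_mult_bounded[OF a, of "\<lambda>x. complex_of_real (h x)" B] h bound
  by (simp add: scaleR_conv_of_real mult.commute)

lemma borel_measurable_cis [measurable]:
  "f \<in> borel_measurable M \<Longrightarrow> (\<lambda>x. cis (f x)) \<in> borel_measurable M"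
  using continuous_on_cis[OF continuous_on_id] borel_measurable_continuous_onI measurable_compose
  by blast

lemma set_integrable_bounded_fmeasurable:
  fixes f :: "'m \<Rightarrow> 'b::{banach, second_countable_topology}"
  assumes S: "S \<in> fmeasurable M" and f: "f \<in> borel_measurable M" and bound: "\<And>y. y \<in> S \<Longrightarrow> norm (f y) \<le> B"
  shows "set_integrable M S f"
proof (rule set_integrable_bound)
  show "set_integrable M S (\<lambda>_. B)"
    using S unfolding set_integrable_def
    by (intro integrable_scaleR_left integrable_real_indicator) (auto simp: fmeasurable_def)
  show "set_borel_measurable M S f"
    using S f unfolding set_borel_measurable_def by (intro borel_measurable_scaleR) auto
  show "AE x in M. x \<in> S \<longrightarrow> norm (f x) \<le> norm B"
    using bound by (intro AE_I2) (auto intro: order_trans[OF _ abs_ge_self])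
qed

lemma norm_set_integral_minus_const_le:
  fixes f :: "'m \<Rightarrow> 'b::{banach, second_countable_topology}"
  assumes S: "S \<in> fmeasurable M" and f: "f \<in> borel_measurable M"
    and close: "\<And>y. y \<in> S \<Longrightarrow> norm (f y - c) \<le> e"
  shows "norm ((LINT y:S|M. f y) - measure M S *\<^sub>R c) \<le> measure M S * e"
proof -
  have "set_integrable M S (\<lambda>y. f y - c)"
    using S f close by (intro set_integrable_bounded_fmeasurable) auto
  moreover have "set_integrable M S (\<lambda>_. c)"
    using S by (intro set_integrable_bounded_fmeasurable) auto
  ultimately have "(LINT y:S|M. f y) - measure M S *\<^sub>R c = (LINT y:S|M. f y - c)"
    using S set_integral_add[of M S "\<lambda>y. f y - c" "\<lambda>_. c"]
    by (simp add: set_integral_const fmeasurable_def less_top)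
  also have "norm \<dots> \<le> (LINT y|M. indicator S y * e)"
    unfolding set_lebesgue_integral_def
  proof (rule order_trans[OF integral_norm_bound integral_mono])
    show "integrable M (\<lambda>y. indicator S y * e)"
      using S by (intro integrable_mult_left integrable_real_indicator) (auto simp: fmeasurable_def)
  qed (use integrable_norm[OF \<open>set_integrable M S (\<lambda>y. f y - c)\<close>[unfolded set_integrable_def]] close
      in \<open>auto simp: indicator_def\<close>)
  also have "\<dots> = measure M S * e"
    using S by (simp add: fmeasurable_def)
  finally show ?thesis .
qed

lemma norm_double_set_integral_minus_const_le:
  fixes h :: "'a::euclidean_space \<Rightarrow> 'b::euclidean_space \<Rightarrow> 'c::{banach, second_countable_topology}"
  assumes S1: "S1 \<in> fmeasurable lborel" and S2: "S2 \<in> fmeasurable lborel"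
    and h: "(\<lambda>(y, z). h y z) \<in> borel_measurable (lborel \<Otimes>\<^sub>M lborel)"
    and close: "\<And>y z. y \<in> S1 \<Longrightarrow> z \<in> S2 \<Longrightarrow> norm (h y z - c) \<le> e"
  shows "norm ((LINT y:S1|lborel. LINT z:S2|lborel. h y z) - (measure lborel S1 * measure lborel S2) *\<^sub>R c)
    \<le> measure lborel S1 * measure lborel S2 * e"
proof -
  have [measurable]: "S2 \<in> sets lborel"
    using S2 by auto
  have "(\<lambda>y. LINT z:S2|lborel. h y z) \<in> borel_measurable lborel"
    using h unfolding set_lebesgue_integral_def by measurable
  moreover have "norm ((LINT z:S2|lborel. h y z) - measure lborel S2 *\<^sub>R c) \<le> measure lborel S2 * e"
    if "y \<in> S1" for y
    using close[OF that] measurable_Pair2[OF h, of y] by (intro norm_set_integral_minus_const_le[OF S2]) auto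
  ultimately have "norm ((LINT y:S1|lborel. LINT z:S2|lborel. h y z) - measure lborel S1 *\<^sub>R measure lborel S2 *\<^sub>R c)
      \<le> measure lborel S1 * (measure lborel S2 * e)"
    by (rule norm_set_integral_minus_const_le[OF S1])
  then show ?thesis
    by (simp add: mult_ac)
qed

lemma norm_integral_scaleR_diff_le:
  fixes a :: "'m \<Rightarrow> complex"
  assumes "integrable M a" "integrable M (\<lambda>x. f x *\<^sub>R a x)" "integrable M (\<lambda>x. g x *\<^sub>R a x)"
    and close: "AE x in M. a x \<noteq> 0 \<longrightarrow> \<bar>f x - g x\<bar> \<le> e"
  shows "norm ((LINT x|M. f x *\<^sub>R a x) - (LINT x|M. g x *\<^sub>R a x)) \<le> e * (LINT x|M. norm (a x))"
proof -
  have "norm ((LINT x|M. f x *\<^sub>R a x) - (LINT x|M. g x *\<^sub>R a x))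
      \<le> (LINT x|M. norm ((f x - g x) *\<^sub>R a x))"
    using assms integral_norm_bound[of M "\<lambda>x. (f x - g x) *\<^sub>R a x"]
    by (simp add: scaleR_diff_left)
  also have "\<dots> \<le> (LINT x|M. e * norm (a x))"
  proof (intro integral_mono_AE)
    show "AE x in M. norm ((f x - g x) *\<^sub>R a x) \<le> e * norm (a x)"
      using close by eventually_elim (auto intro: mult_right_mono)
  qed (use assms(1-3) in \<open>auto simp: scaleR_diff_left\<close>)
  finally show ?thesis
    by simp
qed

lemma integral_mult_set_integral_swap:
  fixes b :: "'a::euclidean_space \<Rightarrow> complex" and k :: "'a \<Rightarrow> 'b::euclidean_space \<Rightarrow> complex"
  assumes b: "integrable lborel b" and S: "S \<in> fmeasurable lborel"
    and k: "(\<lambda>(x, y). k x y) \<in> borel_measurable (lborel \<Otimes>\<^sub>M lborel)" and bound: "\<And>x y. norm (k x y) \<le> 1"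
  shows "(LINT x|lborel. b x * (LINT y:S|lborel. k x y)) = (LINT y:S|lborel. LINT x|lborel. b x * k x y)"
proof -
  have [measurable]: "b \<in> borel_measurable lborel" "S \<in> sets lborel"
    using b S by auto
  define f where "f x y = b x * (indicator S y *\<^sub>R k x y)" for x y
  have f_meas [measurable]: "(\<lambda>(x, y). f x y) \<in> borel_measurable (lborel \<Otimes>\<^sub>M lborel)"
    using k unfolding f_def by measurable
  have ind: "integrable lborel (\<lambda>y. norm (b x) * indicator S y :: real)" for x
    using S by (intro integrable_mult_right integrable_real_indicator) (auto simp: fmeasurable_def)
  have norm_f: "norm (f x y) \<le> norm (b x) * indicator S y" for x y
    using bound[of x y] by (auto simp: f_def norm_mult indicator_def intro: mult_left_le)
  have f_int: "integrable lborel (f x)" for x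
  proof (rule Bochner_Integration.integrable_bound[OF ind])
    show "f x \<in> borel_measurable lborel"
      using measurable_Pair2[OF f_meas, of x] by simp
    show "AE y in lborel. norm (f x y) \<le> norm (norm (b x) * indicator S y)"
      using norm_f by (intro AE_I2) (simp add: abs_mult)
  qed
  have "(LINT y|lborel. norm (f x y)) \<le> (LINT y|lborel. norm (b x) * indicator S y)" for x
    using norm_f f_int ind by (intro integral_mono) auto
  then have "AE x in lborel. norm (LINT y|lborel. norm (f x y)) \<le> norm (measure lborel S *\<^sub>R norm (b x))"
    by (intro AE_I2) (simp add: mult.commute)
  then have "integrable lborel (\<lambda>x. LINT y|lborel. norm (f x y))"
    by (intro Bochner_Integration.integrable_bound[OF integrable_scaleR_right[OF integrable_norm[OF b]]])
      measurable
  then have "integrable (lborel \<Otimes>\<^sub>M lborel) (\<lambda>(x, y). f x y)"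
    by (intro lborel_pair.Fubini_integrable[OF f_meas]) (simp_all add: f_int)
  then have "(LINT x|lborel. LINT y|lborel. f x y) = (LINT y|lborel. LINT x|lborel. f x y)"
    by (rule lborel_pair.Fubini_integral[symmetric])
  moreover have "(LINT y|lborel. f x y) = b x * (LINT y:S|lborel. k x y)" for x
    unfolding f_def set_lebesgue_integral_def by (rule integral_mult_right_zero)
  moreover have "(LINT x|lborel. f x y) = indicator S y *\<^sub>R (LINT x|lborel. b x * k x y)" for y
    unfolding f_def mult_scaleR_right by (rule integral_scaleR_right)
  ultimately show ?thesis
    by (simp add: set_lebesgue_integral_def)
qed

lemma cnj_set_integral_cis:
  "cnj (LINT y:S|M. cis (f y)) = (LINT y:S|M. cis (- f y))"
  unfolding set_lebesgue_integral_def Bochner_Integration.integral_cnj[symmetric]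
  by (simp add: complex_cnj_scaleR cis_cnj)

lemma norm_set_integral_cis_le:
  assumes "S \<in> fmeasurable M" and "f \<in> borel_measurable M"
  shows "norm (LINT y:S|M. cis (f y)) \<le> measure M S"
  using norm_set_integral_minus_const_le[OF assms(1), of "\<lambda>y. cis (f y)" 0 1] assms(2) by simp

section \<open>Analytic continuation of the Fourier transform\<close>

lemma powser_coeff_eq_0_if_vanishes_near_0:
  fixes c :: "nat \<Rightarrow> complex"
  assumes summable: "\<And>z. summable (\<lambda>k. c k * z ^ k)"
    and "d > 0"
    and vanishes: "\<And>t::real. \<bar>t\<bar> < d \<Longrightarrow> (\<Sum>k. c k * complex_of_real t ^ k) = 0"
  shows "c n = 0"
proof (rule ccontr)
  assume "c n \<noteq> 0"
  have c0: "c 0 = 0"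
    using vanishes[of 0] \<open>d > 0\<close> by simp
  with \<open>c n \<noteq> 0\<close> have "n > 0" by (cases n) auto
  have "(\<lambda>k. c k * (z - 0) ^ k) sums (\<Sum>k. c k * z ^ k)" for z
    using summable[of z] by (simp add: summable_sums)
  then obtain s where "s > 0" and nonzero: "\<And>z. z \<in> cball 0 s - {0} \<Longrightarrow> (\<Sum>k. c k * z ^ k) \<noteq> 0"
    using powser_0_nonzero[of 1 0 c "\<lambda>z. \<Sum>k. c k * z ^ k" n] c0 \<open>c n \<noteq> 0\<close> \<open>n > 0\<close> by auto
  define t where "t = min s (d / 2)"
  have "complex_of_real t \<in> cball 0 s - {0}"
    using \<open>s > 0\<close> \<open>d > 0\<close> by (auto simp: t_def)
  moreover have "\<bar>t\<bar> < d"
    using \<open>s > 0\<close> \<open>d > 0\<close> by (auto simp: t_def)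
  ultimately show False
    using nonzero vanishes by blast
qed

definition fourier_integral :: "('a::euclidean_space \<Rightarrow> complex) \<Rightarrow> 'a \<Rightarrow> complex" where
  "fourier_integral a \<zeta> = (LINT x|lborel. a x * cis (x \<bullet> \<zeta>))"

lemma integrable_mult_cis:
  fixes a :: "'a::euclidean_space \<Rightarrow> complex"
  shows "integrable lborel a \<Longrightarrow> integrable lborel (\<lambda>x. a x * cis (x \<bullet> \<zeta>))"
  by (rule integrable_mult_bounded[where B = 1]) auto

lemma continuous_on_fourier_integral:
  fixes a :: "'a::euclidean_space \<Rightarrow> complex"
  assumes a: "integrable lborel a"
  shows "continuous_on UNIV (fourier_integral a)"
proof (rule continuous_on_sequentiallyI)
  fix u :: "nat \<Rightarrow> 'a" and \<zeta> assume u: "u \<longlonglongrightarrow> \<zeta>"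
  have [measurable]: "a \<in> borel_measurable lborel"
    using a by auto
  show "(\<lambda>n. fourier_integral a (u n)) \<longlonglongrightarrow> fourier_integral a \<zeta>"
    unfolding fourier_integral_def
  proof (rule integral_dominated_convergence[where w = "\<lambda>x. norm (a x)"])
    show "AE x in lborel. (\<lambda>n. a x * cis (x \<bullet> u n)) \<longlonglongrightarrow> a x * cis (x \<bullet> \<zeta>)"
      using u by (intro AE_I2 tendsto_intros)
  qed (use a in \<open>auto simp: norm_mult\<close>)
qed

definition taylor_moment :: "('a::euclidean_space \<Rightarrow> complex) \<Rightarrow> 'a \<Rightarrow> nat \<Rightarrow> complex" where
  "taylor_moment a \<zeta> k = (LINT x|lborel. a x * ((\<i> * complex_of_real (x \<bullet> \<zeta>)) ^ k /\<^sub>R fact k))"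

lemma summable_mult_exp_series: "summable (\<lambda>k. C * (B ^ k / fact k :: real))"
  using summable_exp[of B] by (intro summable_mult) (simp add: field_simps)

lemma norm_taylor_term:
  "norm (a x * ((\<i> * complex_of_real (x \<bullet> \<zeta>)) ^ k /\<^sub>R fact k)) = norm (a x) * (\<bar>x \<bullet> \<zeta>\<bar> ^ k / fact k)"
  by (simp add: norm_mult norm_power field_simps)

lemma norm_taylor_term_le:
  fixes a :: "'a::euclidean_space \<Rightarrow> complex"
  assumes "a x = 0 \<or> \<bar>x \<bullet> \<zeta>\<bar> \<le> B"
  shows "norm (a x * ((\<i> * complex_of_real (x \<bullet> \<zeta>)) ^ k /\<^sub>R fact k)) \<le> norm (a x) * (B ^ k / fact k)"
  using assms unfolding norm_taylor_term
  by (cases "a x = 0") (auto intro!: mult_left_mono divide_right_mono power_mono)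

lemma AE_norm_taylor_term_le:
  fixes a :: "'a::euclidean_space \<Rightarrow> complex"
  assumes "AE x in lborel. a x = 0 \<or> \<bar>x \<bullet> \<zeta>\<bar> \<le> B"
  shows "AE x in lborel.
    norm (a x * ((\<i> * complex_of_real (x \<bullet> \<zeta>)) ^ k /\<^sub>R fact k)) \<le> norm (a x) * (B ^ k / fact k)"
  using assms by eventually_elim (rule norm_taylor_term_le)

lemma integrable_taylor_moment_term:
  fixes a :: "'a::euclidean_space \<Rightarrow> complex"
  assumes a: "integrable lborel a" and support: "AE x in lborel. a x = 0 \<or> \<bar>x \<bullet> \<zeta>\<bar> \<le> B"
  shows "integrable lborel (\<lambda>x. a x * ((\<i> * complex_of_real (x \<bullet> \<zeta>)) ^ k /\<^sub>R fact k))"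
proof (rule Bochner_Integration.integrable_bound)
  show "integrable lborel (\<lambda>x. norm (a x) * (B ^ k / fact k))"
    using a by simp
  show "(\<lambda>x. a x * ((\<i> * complex_of_real (x \<bullet> \<zeta>)) ^ k /\<^sub>R fact k)) \<in> borel_measurable lborel"
    using a by measurable
  show "AE x in lborel. norm (a x * ((\<i> * complex_of_real (x \<bullet> \<zeta>)) ^ k /\<^sub>R fact k))
      \<le> norm (norm (a x) * (B ^ k / fact k))"
    using AE_norm_taylor_term_le[where k=k, OF support] by eventually_elim (unfold real_norm_def, erule order_trans[OF _ abs_ge_self])
qed

lemma norm_taylor_moment_le:
  fixes a :: "'a::euclidean_space \<Rightarrow> complex"
  assumes a: "integrable lborel a" and support: "AE x in lborel. a x = 0 \<or> \<bar>x \<bullet> \<zeta>\<bar> \<le> B"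
  shows "norm (taylor_moment a \<zeta> k) \<le> (LINT x|lborel. norm (a x)) * (B ^ k / fact k)"
proof -
  have "norm (taylor_moment a \<zeta> k)
      \<le> (LINT x|lborel. norm (a x * ((\<i> * complex_of_real (x \<bullet> \<zeta>)) ^ k /\<^sub>R fact k)))"
    unfolding taylor_moment_def by (rule integral_norm_bound)
  also have "\<dots> \<le> (LINT x|lborel. norm (a x) * (B ^ k / fact k))"
    using a by (intro integral_mono_AE[OF integrable_norm[OF integrable_taylor_moment_term[OF a support]]
          _ AE_norm_taylor_term_le[OF support]]) simp
  finally show ?thesis by simp
qed

lemma taylor_moment_sums_fourier_integral:
  fixes a :: "'a::euclidean_space \<Rightarrow> complex"
  assumes a: "integrable lborel a" and support: "AE x in lborel. a x = 0 \<or> \<bar>x \<bullet> \<zeta>\<bar> \<le> B"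
  shows "taylor_moment a \<zeta> sums fourier_integral a \<zeta>"
proof -
  define f where "f k x = a x * ((\<i> * complex_of_real (x \<bullet> \<zeta>)) ^ k /\<^sub>R fact k)" for k x
  have "(\<lambda>k. LINT x|lborel. f k x) sums (LINT x|lborel. (\<Sum>k. f k x))"
  proof (rule sums_integral)
    show "integrable lborel (f k)" for k
      unfolding f_def by (rule integrable_taylor_moment_term[OF a support])
    show "AE x in lborel. summable (\<lambda>k. norm (f k x))"
      unfolding f_def norm_taylor_term by (intro AE_I2 summable_mult_exp_series)
    have "(LINT x|lborel. norm (f k x)) \<le> (LINT x|lborel. norm (a x) * (B ^ k / fact k))" for k
      using a unfolding f_def
      by (intro integral_mono_AE[OF integrable_norm[OF integrable_taylor_moment_term[OF a support]]
          _ AE_norm_taylor_term_le[OF support]]) simp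
    then show "summable (\<lambda>k. LINT x|lborel. norm (f k x))"
      by (intro summable_comparison_test'[OF summable_mult_exp_series]) auto
  qed
  moreover have "(\<Sum>k. f k x) = a x * cis (x \<bullet> \<zeta>)" for x
    using sums_mult[OF exp_converges[of "\<i> * complex_of_real (x \<bullet> \<zeta>)"], of "a x"]
    by (simp add: f_def sums_iff cis_conv_exp mult_ac)
  ultimately show ?thesis
    by (simp add: f_def taylor_moment_def[abs_def] fourier_integral_def)
qed

lemma taylor_moment_scaleR:
  "taylor_moment a (t *\<^sub>R \<zeta>) = (\<lambda>k. taylor_moment a \<zeta> k * complex_of_real t ^ k)"
proof
  fix k
  have "a x * ((\<i> * complex_of_real (x \<bullet> t *\<^sub>R \<zeta>)) ^ k /\<^sub>R fact k)
      = a x * ((\<i> * complex_of_real (x \<bullet> \<zeta>)) ^ k /\<^sub>R fact k) * complex_of_real t ^ k" for x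
    by (simp add: power_mult_distrib scaleR_conv_of_real)
  then have "taylor_moment a (t *\<^sub>R \<zeta>) k
      = (LINT x|lborel. a x * ((\<i> * complex_of_real (x \<bullet> \<zeta>)) ^ k /\<^sub>R fact k) * complex_of_real t ^ k)"
    unfolding taylor_moment_def by (simp only:)
  also have "\<dots> = taylor_moment a \<zeta> k * complex_of_real t ^ k"
    unfolding taylor_moment_def by (rule integral_mult_left_zero)
  finally show "taylor_moment a (t *\<^sub>R \<zeta>) k = taylor_moment a \<zeta> k * complex_of_real t ^ k" .
qed

lemma fourier_integral_ray_power_series:
  fixes a :: "'a::euclidean_space \<Rightarrow> complex"
  assumes a: "integrable lborel a" and "compact K" and support: "AE x in lborel. x \<notin> K \<longrightarrow> a x = 0"
  shows "summable (\<lambda>k. taylor_moment a \<zeta> k * z ^ k)"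
    and "(\<lambda>k. taylor_moment a \<zeta> k * complex_of_real t ^ k) sums fourier_integral a (t *\<^sub>R \<zeta>)"
proof -
  obtain R where R: "\<And>x. x \<in> K \<Longrightarrow> norm x \<le> R"
    using compact_imp_bounded[OF \<open>compact K\<close>] unfolding bounded_iff by blast
  have support_ray: "AE x in lborel. a x = 0 \<or> \<bar>x \<bullet> s *\<^sub>R \<zeta>\<bar> \<le> \<bar>s\<bar> * (R * norm \<zeta>)" for s
    using support
  proof eventually_elim
    case (elim x)
    have "\<bar>x \<bullet> s *\<^sub>R \<zeta>\<bar> \<le> \<bar>s\<bar> * (norm x * norm \<zeta>)"
      using Cauchy_Schwarz_ineq2[of x \<zeta>] by (simp add: abs_mult mult_left_mono)
    also have "\<dots> \<le> \<bar>s\<bar> * (R * norm \<zeta>)" if "x \<in> K"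
      using R[OF that] by (simp add: mult_left_mono mult_right_mono)
    finally show ?case
      using elim by blast
  qed
  show "(\<lambda>k. taylor_moment a \<zeta> k * complex_of_real t ^ k) sums fourier_integral a (t *\<^sub>R \<zeta>)"
    using taylor_moment_sums_fourier_integral[OF a support_ray[of t]] unfolding taylor_moment_scaleR .
  show "summable (\<lambda>k. taylor_moment a \<zeta> k * z ^ k)"
  proof (rule summable_comparison_test'[OF summable_mult_exp_series])
    fix k
    have "norm (taylor_moment a \<zeta> k) * norm z ^ k
        \<le> (LINT x|lborel. norm (a x)) * ((R * norm \<zeta>) ^ k / fact k) * norm z ^ k"
      using norm_taylor_moment_le[OF a support_ray[of 1]] by (intro mult_right_mono) auto
    then show "norm (taylor_moment a \<zeta> k * z ^ k)
        \<le> (LINT x|lborel. norm (a x)) * ((R * norm \<zeta> * norm z) ^ k / fact k)"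
      by (simp add: norm_mult norm_power power_mult_distrib)
  qed
qed

lemma fourier_integral_eq_0_if_vanishes_near_0:
  fixes a :: "'a::euclidean_space \<Rightarrow> complex"
  assumes a: "integrable lborel a" and "compact K" and support: "AE x in lborel. x \<notin> K \<longrightarrow> a x = 0"
    and "r > 0" and vanishes: "\<And>\<zeta>. norm \<zeta> < r \<Longrightarrow> fourier_integral a \<zeta> = 0"
  shows "fourier_integral a \<zeta> = 0"
proof -
  note sums = fourier_integral_ray_power_series(2)[OF a \<open>compact K\<close> support, of \<zeta>]
  have "taylor_moment a \<zeta> k = 0" for k
  proof (rule powser_coeff_eq_0_if_vanishes_near_0)
    show "summable (\<lambda>k. taylor_moment a \<zeta> k * z ^ k)" for z
      by (rule fourier_integral_ray_power_series(1)[OF a \<open>compact K\<close> support])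
    show "r / (norm \<zeta> + 1) > 0"
      using \<open>r > 0\<close> by (simp add: add_nonneg_pos)
    fix t :: real assume t: "\<bar>t\<bar> < r / (norm \<zeta> + 1)"
    have "norm (t *\<^sub>R \<zeta>) \<le> \<bar>t\<bar> * (norm \<zeta> + 1)"
      by (simp add: mult_left_mono)
    also have "\<dots> < r"
      using t by (simp add: pos_less_divide_eq add_nonneg_pos)
    finally have "norm (t *\<^sub>R \<zeta>) < r" .
    then show "(\<Sum>k. taylor_moment a \<zeta> k * complex_of_real t ^ k) = 0"
      using sums[of t] vanishes by (simp add: sums_iff)
  qed
  then show ?thesis
    using sums[of 1] by (simp add: sums_iff)
qed

section \<open>Uniqueness for the Fourier transform\<close>

definition trig_poly :: "(complex \<times> 'a) list \<Rightarrow> 'a::real_inner \<Rightarrow> complex" where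
  "trig_poly L x = (\<Sum>(c, \<xi>)\<leftarrow>L. c * cis (x \<bullet> \<xi>))"

lemma trig_poly_simps [simp]:
  "trig_poly [] x = 0"
  "trig_poly ((c, \<xi>) # L) x = c * cis (x \<bullet> \<xi>) + trig_poly L x"
  "trig_poly (L1 @ L2) x = trig_poly L1 x + trig_poly L2 x"
  by (simp_all add: trig_poly_def)

lemma trig_poly_divide: "trig_poly (map (\<lambda>(c, \<xi>). (c / k, \<xi>)) L) x = trig_poly L x / k"
  by (induction L) (auto simp: add_divide_distrib)

lemma trig_poly_cnj: "trig_poly (map (\<lambda>(c, \<xi>). (cnj c, - \<xi>)) L) x = cnj (trig_poly L x)"
  by (induction L) (auto simp: cis_cnj)

lemma trig_poly_shift:
  "trig_poly (map (\<lambda>(d, \<eta>). (c * d, \<xi> + \<eta>)) L) x = c * cis (x \<bullet> \<xi>) * trig_poly L x"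
  by (induction L) (auto simp: algebra_simps inner_add_right cis_mult)

definition trig_poly_times :: "(complex \<times> 'a) list \<Rightarrow> (complex \<times> 'a::real_inner) list \<Rightarrow> (complex \<times> 'a) list" where
  "trig_poly_times L1 L2 = concat (map (\<lambda>(c, \<xi>). map (\<lambda>(d, \<eta>). (c * d, \<xi> + \<eta>)) L2) L1)"

lemma trig_poly_times: "trig_poly (trig_poly_times L1 L2) x = trig_poly L1 x * trig_poly L2 x"
  by (induction L1) (auto simp: trig_poly_times_def trig_poly_shift algebra_simps)

lemma Re_trig_poly_is_trig_poly:
  obtains L' where "\<And>x. trig_poly L' x = complex_of_real (Re (trig_poly L x))"
proof
  show "trig_poly (map (\<lambda>(c, \<xi>). (c / 2, \<xi>)) (L @ map (\<lambda>(c, \<xi>). (cnj c, - \<xi>)) L)) x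
    = complex_of_real (Re (trig_poly L x))" for x
    by (simp only: trig_poly_divide trig_poly_simps trig_poly_cnj complex_add_cnj) simp
qed

lemma continuous_on_trig_poly: "continuous_on S (trig_poly L)"
proof (induction L)
  case (Cons p L)
  then show ?case
    by (cases p) (auto simp: trig_poly_def[abs_def] intro!: continuous_intros)
qed (simp add: trig_poly_def[abs_def])

lemma borel_measurable_trig_poly [measurable]: "trig_poly L \<in> borel_measurable borel"
  by (rule borel_measurable_continuous_onI[OF continuous_on_trig_poly])

lemma norm_trig_poly_le: "norm (trig_poly L x) \<le> (\<Sum>(c, \<xi>)\<leftarrow>L. norm c)"
proof (induction L)
  case (Cons p L)
  then show ?case
    by (cases p) (auto simp: norm_mult intro: norm_triangle_le)
qed simp

lemma integral_mult_trig_poly_eq_0: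
  fixes a :: "'a::euclidean_space \<Rightarrow> complex"
  assumes a: "integrable lborel a" and fourier: "\<And>\<zeta>. fourier_integral a \<zeta> = 0"
  shows "(LINT x|lborel. a x * trig_poly L x) = 0"
proof (induction L)
  case (Cons p L)
  obtain c \<xi> where p: "p = (c, \<xi>)"
    by (cases p)
  have "integrable lborel (\<lambda>x. a x * trig_poly L x)"
    using norm_trig_poly_le by (intro integrable_mult_bounded[OF a]) auto
  then have "(LINT x|lborel. a x * trig_poly (p # L) x)
      = c * fourier_integral a \<xi> + (LINT x|lborel. a x * trig_poly L x)"
    using integrable_mult_cis[OF a] by (simp add: p fourier_integral_def algebra_simps)
  then show ?case
    using fourier Cons by simp
qed simp

lemma integral_Re_trig_poly_eq_0:
  fixes a :: "'a::euclidean_space \<Rightarrow> complex"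
  assumes a: "integrable lborel a" and fourier: "\<And>\<zeta>. fourier_integral a \<zeta> = 0"
  shows "(LINT x|lborel. Re (trig_poly L x) *\<^sub>R a x) = 0"
proof -
  obtain L' where L': "\<And>x. trig_poly L' x = complex_of_real (Re (trig_poly L x))"
    using Re_trig_poly_is_trig_poly[of L] by blast
  have "(LINT x|lborel. Re (trig_poly L x) *\<^sub>R a x) = (LINT x|lborel. a x * trig_poly L' x)"
    by (simp add: L' scaleR_conv_of_real mult.commute)
  then show ?thesis
    using integral_mult_trig_poly_eq_0[OF a fourier] by simp
qed

definition real_trig_poly :: "('a::real_inner \<Rightarrow> real) \<Rightarrow> bool" where
  "real_trig_poly g \<longleftrightarrow> (\<exists>L. g = (\<lambda>x. Re (trig_poly L x)))"

lemma real_trig_poly_mult: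
  assumes "real_trig_poly g" and "real_trig_poly h"
  shows "real_trig_poly (\<lambda>x. g x * h x)"
proof -
  obtain L1 L2 where g: "g = (\<lambda>x. Re (trig_poly L1 x))" and h: "h = (\<lambda>x. Re (trig_poly L2 x))"
    using assms unfolding real_trig_poly_def by blast
  \<comment> \<open>\<open>Re u * Re v = Re ((u + cnj u) / 2 * v)\<close>, since \<open>(u + cnj u) / 2\<close> is real\<close>
  define L where "L = map (\<lambda>(c, \<xi>). (c / 2, \<xi>))
    (trig_poly_times L1 L2 @ trig_poly_times (map (\<lambda>(c, \<xi>). (cnj c, - \<xi>)) L1) L2)"
  have "Re (trig_poly L x) = g x * h x" for x
    unfolding L_def g h trig_poly_divide trig_poly_simps trig_poly_times trig_poly_cnj
    by (simp add: field_simps)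
  then show ?thesis
    unfolding real_trig_poly_def by (intro exI[of _ L]) auto
qed

lemma real_trig_poly_separates:
  fixes x y :: "'a::real_inner"
  assumes "x \<noteq> y"
  shows "\<exists>g. real_trig_poly g \<and> g x \<noteq> g y"
proof (rule ccontr)
  assume "\<not> ?thesis"
  then have equal: "Re (trig_poly L x) = Re (trig_poly L y)" for L
    unfolding real_trig_poly_def by blast
  define \<xi> where "\<xi> = (pi / 2 / ((x - y) \<bullet> (x - y))) *\<^sub>R (x - y)"
  have "(x - y) \<bullet> \<xi> = pi / 2"
    using assms by (simp add: \<xi>_def)
  then have x\<xi>: "x \<bullet> \<xi> = y \<bullet> \<xi> + pi / 2"
    by (simp add: inner_diff_left)
  have "cos (y \<bullet> \<xi>) = - sin (y \<bullet> \<xi>)"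
    using equal[of "[(1, \<xi>)]"] by (simp add: x\<xi> cos_add)
  moreover have "sin (y \<bullet> \<xi>) = cos (y \<bullet> \<xi>)"
    using equal[of "[(- \<i>, \<xi>)]"] by (simp add: x\<xi> sin_add)
  ultimately show False
    using sin_cos_squared_add[of "y \<bullet> \<xi>"] by simp
qed

lemma real_trig_poly_approx:
  fixes f :: "'a::euclidean_space \<Rightarrow> real"
  assumes "compact K" and "continuous_on K f" and "e > 0"
  obtains L where "\<And>x. x \<in> K \<Longrightarrow> \<bar>f x - Re (trig_poly L x)\<bar> < e"
proof -
  have "\<exists>g. real_trig_poly g \<and> (\<forall>x\<in>K. \<bar>f x - g x\<bar> < e)"
  proof (rule Stone_Weierstrass_HOL[OF \<open>compact K\<close>, where f = f and e = e])
    show "real_trig_poly (\<lambda>x. c)" for c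
      unfolding real_trig_poly_def by (rule exI[of _ "[(complex_of_real c, 0)]"]) simp
    show "continuous_on K g" if "real_trig_poly g" for g
      using that continuous_on_trig_poly unfolding real_trig_poly_def
      by (auto intro: continuous_on_Re)
    show "real_trig_poly (\<lambda>x. g x + h x)" if "real_trig_poly g \<and> real_trig_poly h" for g h
      using that unfolding real_trig_poly_def by (metis trig_poly_simps(3) plus_complex.sel(1))
  qed (use assms real_trig_poly_mult real_trig_poly_separates in auto)
  then show ?thesis
    using that unfolding real_trig_poly_def by blast
qed

lemma integral_continuous_scaleR_eq_0:
  fixes a :: "'a::euclidean_space \<Rightarrow> complex"
  assumes a: "integrable lborel a" and "compact K" and support: "AE x in lborel. x \<notin> K \<longrightarrow> a x = 0"
    and fourier: "\<And>\<zeta>. fourier_integral a \<zeta> = 0"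
    and f: "continuous_on UNIV f" "\<And>x. \<bar>f x\<bar> \<le> 1"
  shows "(LINT x|lborel. f x *\<^sub>R a x) = 0"
proof -
  define N where "N = (LINT x|lborel. norm (a x))"
  have "N \<ge> 0"
    unfolding N_def by simp
  have fa: "integrable lborel (\<lambda>x. f x *\<^sub>R a x)"
    using f borel_measurable_continuous_onI[OF f(1)] by (intro integrable_scaleR_bounded[OF a]) auto
  have "norm (LINT x|lborel. f x *\<^sub>R a x) \<le> e" if "e > 0" for e
  proof -
    obtain L where L: "\<And>x. x \<in> K \<Longrightarrow> \<bar>f x - Re (trig_poly L x)\<bar> < e / (N + 1)"
      using real_trig_poly_approx[OF \<open>compact K\<close> continuous_on_subset[OF f(1)]] \<open>e > 0\<close> \<open>N \<ge> 0\<close>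
      by (metis add_nonneg_pos divide_pos_pos subset_UNIV zero_less_one)
    have "\<bar>Re (trig_poly L x)\<bar> \<le> (\<Sum>(c, \<xi>)\<leftarrow>L. norm c)" for x
      using abs_Re_le_cmod norm_trig_poly_le order_trans by blast
    then have ga: "integrable lborel (\<lambda>x. Re (trig_poly L x) *\<^sub>R a x)"
      by (intro integrable_scaleR_bounded[OF a]) auto
    have "AE x in lborel. a x \<noteq> 0 \<longrightarrow> \<bar>f x - Re (trig_poly L x)\<bar> \<le> e / (N + 1)"
      using support by eventually_elim (use L in \<open>auto intro: less_imp_le\<close>)
    from norm_integral_scaleR_diff_le[OF a fa ga this]
    have "norm (LINT x|lborel. f x *\<^sub>R a x) \<le> e / (N + 1) * N"
      unfolding integral_Re_trig_poly_eq_0[OF a fourier] N_def by simp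
    also have "\<dots> \<le> e"
      using \<open>e > 0\<close> \<open>N \<ge> 0\<close> by (simp add: field_simps)
    finally show ?thesis .
  qed
  then show ?thesis
    using field_le_epsilon[of "norm (LINT x|lborel. f x *\<^sub>R a x)" 0] by simp
qed

lemma set_integral_open_eq_0_if_continuous_orthogonal:
  fixes b :: "'a::euclidean_space \<Rightarrow> complex"
  assumes b: "integrable lborel b"
    and orth: "\<And>f. continuous_on UNIV f \<Longrightarrow> (\<forall>x. \<bar>f x\<bar> \<le> 1) \<Longrightarrow> (LINT x|lborel. f x *\<^sub>R b x) = 0"
    and "open U"
  shows "(LINT x:U|lborel. b x) = 0"
  \<comment> \<open>the cut-offs \<open>f n\<close> below increase to the indicator of \<open>U\<close>, except for \<open>U = UNIV\<close>,
    where \<open>infdist x {} = 0\<close> makes them vanish\<close>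
proof (cases "U = UNIV")
  case True
  then show ?thesis
    using orth[of "\<lambda>_. 1"] by (simp add: set_lebesgue_integral_def)
next
  case False
  define f where "f n x = min 1 (real n * infdist x (- U))" for n :: nat and x
  have f_cont: "continuous_on UNIV (f n)" for n
    unfolding f_def by (intro continuous_intros)
  have f_bound: "\<bar>f n x\<bar> \<le> 1" for n x
    by (simp add: f_def infdist_nonneg)
  have "(\<lambda>n. f n x) \<longlonglongrightarrow> indicator U x" for x
  proof (cases "x \<in> U")
    case True
    have "infdist x (- U) > 0"
      using False True \<open>open U\<close> by (intro infdist_pos_not_in_closed) auto
    then obtain N :: nat where "1 < N * infdist x (- U)"
      using reals_Archimedean2[of "1 / infdist x (- U)"] by (auto simp: divide_less_eq)
    then have "real n * infdist x (- U) \<ge> 1" if "N \<le> n" for n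
      using \<open>infdist x (- U) > 0\<close> that
      by (meson less_imp_le mult_right_mono of_nat_le_iff order_trans)
    then have "eventually (\<lambda>n. f n x = indicator U x) sequentially"
      unfolding eventually_sequentially f_def using True by (auto simp: min_def)
    then show ?thesis
      by (rule tendsto_eventually)
  qed (simp add: f_def)
  then have "(\<lambda>n. LINT x|lborel. f n x *\<^sub>R b x) \<longlonglongrightarrow> (LINT x|lborel. indicator U x *\<^sub>R b x)"
    using b f_bound borel_measurable_continuous_onI[OF f_cont] \<open>open U\<close>
    by (intro integral_dominated_convergence[where w = "\<lambda>x. norm (b x)"])
       (auto intro!: tendsto_scaleR AE_I2 mult_left_le_one_le)
  moreover have "(LINT x|lborel. f n x *\<^sub>R b x) = 0" for n
    using orth f_cont f_bound by blast
  ultimately show ?thesis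
    by (simp add: LIMSEQ_const_iff set_lebesgue_integral_def)
qed

lemma AE_zero_if_continuous_orthogonal:
  fixes b :: "'a::euclidean_space \<Rightarrow> complex"
  assumes b: "integrable lborel b"
    and orth: "\<And>f. continuous_on UNIV f \<Longrightarrow> (\<forall>x. \<bar>f x\<bar> \<le> 1) \<Longrightarrow> (LINT x|lborel. f x *\<^sub>R b x) = 0"
  shows "AE x in lborel. b x = 0"
proof (rule sigma_finite_measure.density_zero[OF sigma_finite_lborel b])
  have borel_sets: "sigma_sets UNIV {S. open S} = sets (lborel :: 'a measure)"
    by (simp add: borel_def sets_measure_of)
  fix A :: "'a set" assume "A \<in> sets lborel"
  then have "Int_stable {S :: 'a set. open S}" "{S. open S} \<subseteq> Pow UNIV" "A \<in> sigma_sets UNIV {S. open S}"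
    by (auto simp: borel_sets Int_stable_def)
  then show "(LINT x:A|lborel. b x) = 0"
  proof (induction rule: sigma_sets_induct_disjoint)
    case (basic A)
    then show ?case
      using set_integral_open_eq_0_if_continuous_orthogonal[OF b orth] by blast
  next
    case (compl A)
    have "set_integrable lborel S b" if "S \<in> sets lborel" for S
      unfolding set_integrable_def using that b by (rule integrable_mult_indicator)
    then have "(LINT x:A \<union> (UNIV - A)|lborel. b x) = (LINT x:A|lborel. b x) + (LINT x:UNIV - A|lborel. b x)"
      using compl borel_sets by (intro set_integral_Un) auto
    then show ?case
      using compl set_integral_open_eq_0_if_continuous_orthogonal[OF b orth open_UNIV] by simp
  next
    case (union A)
    have "(LINT x:(\<Union>i. A i)|lborel. b x) = (\<Sum>i. LINT x:A i|lborel. b x)"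
    proof (rule lebesgue_integral_countable_add)
      show "A i \<in> sets lborel" for i
        using union borel_sets by blast
      then show "set_integrable lborel (\<Union>i. A i) b"
        unfolding set_integrable_def by (intro integrable_mult_indicator[OF _ b]) auto
    qed (use union in \<open>auto simp: disjoint_family_on_def\<close>)
    then show ?case
      using union by simp
  qed (simp add: set_lebesgue_integral_def)
qed

lemma AE_zero_if_fourier_integral_eq_0:
  fixes a :: "'a::euclidean_space \<Rightarrow> complex"
  assumes a: "integrable lborel a" and "compact K" and support: "AE x in lborel. x \<notin> K \<longrightarrow> a x = 0"
    and fourier: "\<And>\<zeta>. fourier_integral a \<zeta> = 0"
  shows "AE x in lborel. a x = 0"
  using integral_continuous_scaleR_eq_0[OF a \<open>compact K\<close> support fourier]
  by (intro AE_zero_if_continuous_orthogonal[OF a]) blast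

section \<open>Herglotz waves of caps\<close>

text \<open>The surface measure of a subset \<open>C\<close> of the unit sphere is \<open>DIM('a)\<close> times the volume of
  \<open>cone_over C\<close> (cf. \<open>sphere_surface_measure_def\<close>).\<close>

definition cone_over :: "'a set \<Rightarrow> 'a::euclidean_space set" where
  "cone_over C = {y \<in> ball 0 1 - {0}. y /\<^sub>R norm y \<in> C}"

lemma cone_over_eq_vimage: "cone_over C = (ball 0 1 - {0}) \<inter> (\<lambda>y. y /\<^sub>R norm y) -` C"
  by (auto simp: cone_over_def)

lemma borel_measurable_normalize [measurable]:
  "(\<lambda>x::'a::euclidean_space. x /\<^sub>R norm x) \<in> borel_measurable borel"
  by measurable

lemma sets_cone_over [measurable]: "C \<in> sets borel \<Longrightarrow> cone_over C \<in> sets borel"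
  using measurable_sets_borel[OF borel_measurable_normalize, of C]
  unfolding cone_over_eq_vimage by (intro sets.Int sets.Diff) auto

lemma fmeasurable_unit_ball: "ball (0::'a::euclidean_space) 1 \<in> fmeasurable lborel"
  using emeasure_lborel_ball_finite[of "0::'a" 1] by (simp add: fmeasurable_def less_top)

lemma fmeasurable_cone_over:
  assumes "C \<in> sets borel"
  shows "cone_over C \<in> fmeasurable lborel"
proof (rule fmeasurableI2[OF fmeasurable_unit_ball])
  show "cone_over C \<subseteq> ball 0 1"
    by (auto simp: cone_over_def)
  show "cone_over C \<in> sets lborel"
    using sets_cone_over[OF assms] by simp
qed

lemma ball_subset_cone_over_ball:
  fixes \<xi> :: "'a::euclidean_space"
  assumes "norm \<xi> = 1" and "\<delta> > 0"
  shows "ball ((1/2) *\<^sub>R \<xi>) (min (1/4) (\<delta>/8)) \<subseteq> cone_over (ball \<xi> \<delta>)"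
proof
  fix y assume "y \<in> ball ((1/2) *\<^sub>R \<xi>) (min (1/4) (\<delta>/8))"
  then have near: "norm (y - (1/2) *\<^sub>R \<xi>) < min (1/4) (\<delta>/8)"
    by (simp only: mem_ball dist_norm norm_minus_commute)
  have radial: "\<bar>norm y - 1/2\<bar> \<le> norm (y - (1/2) *\<^sub>R \<xi>)"
    using norm_triangle_ineq3[of y "(1/2) *\<^sub>R \<xi>"] \<open>norm \<xi> = 1\<close> by simp
  with near have "norm y > 1/4" "norm y < 1"
    by auto
  then have "norm y \<noteq> 0"
    by auto
  have "norm (y - norm y *\<^sub>R \<xi>) \<le> norm (y - (1/2) *\<^sub>R \<xi>) + norm ((1/2 - norm y) *\<^sub>R \<xi>)"
    using norm_triangle_ineq[of "y - (1/2) *\<^sub>R \<xi>" "(1/2 - norm y) *\<^sub>R \<xi>"]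
    by (simp add: algebra_simps)
  also have "\<dots> < \<delta> / 4"
    using near radial \<open>norm \<xi> = 1\<close> by (simp add: abs_minus_commute)
  finally have close: "norm (y - norm y *\<^sub>R \<xi>) < \<delta> / 4" .
  have "y /\<^sub>R norm y - \<xi> = (y - norm y *\<^sub>R \<xi>) /\<^sub>R norm y"
    using \<open>norm y \<noteq> 0\<close> by (simp add: scaleR_diff_right)
  then have "norm (y /\<^sub>R norm y - \<xi>) = norm (y - norm y *\<^sub>R \<xi>) / norm y"
    by (simp add: divide_inverse_commute)
  also have "\<dots> < \<delta> / 4 / norm y"
    using close \<open>norm y > 1/4\<close> by (intro divide_strict_right_mono) auto
  also have "\<dots> < \<delta>"
  proof -
    have "\<delta> * 1 < \<delta> * (4 * norm y)"
      using \<open>norm y > 1/4\<close> \<open>\<delta> > 0\<close> by (intro mult_strict_left_mono) auto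
    moreover have "4 * norm y > 0"
      using \<open>norm y > 1/4\<close> by linarith
    ultimately show ?thesis
      by (simp add: pos_divide_less_eq)
  qed
  finally have "dist (y /\<^sub>R norm y) \<xi> < \<delta>"
    by (simp only: dist_norm)
  then show "y \<in> cone_over (ball \<xi> \<delta>)"
    using \<open>norm y < 1\<close> \<open>norm y \<noteq> 0\<close> by (simp add: cone_over_def dist_commute)
qed

lemma measure_cone_over_ball_pos:
  fixes \<xi> :: "'a::euclidean_space"
  assumes "norm \<xi> = 1" and "\<delta> > 0"
  shows "measure lborel (cone_over (ball \<xi> \<delta>)) > 0"
proof -
  have "0 < measure lborel (ball ((1/2) *\<^sub>R \<xi>) (min (1/4) (\<delta>/8)))"
    using \<open>\<delta> > 0\<close> by simp
  also have "\<dots> \<le> measure lborel (cone_over (ball \<xi> \<delta>))"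
    using ball_subset_cone_over_ball[OF assms] fmeasurable_cone_over[of "ball \<xi> \<delta>"]
    by (intro measure_mono_fmeasurable) auto
  finally show ?thesis .
qed

lemma normalize_measurable_cone:
  "(\<lambda>x::'a::euclidean_space. x /\<^sub>R norm x)
    \<in> measurable (restrict_space lborel (ball 0 1 - {0})) (restrict_space borel (sphere 0 1))"
  by (intro measurable_restrict_space2 measurable_restrict_space1) (auto simp: space_restrict_space)

lemma sets_sphere_surface_measure:
  "sets (sphere_surface_measure :: 'a::euclidean_space measure) = sets (restrict_space borel (sphere 0 1))"
  by (simp add: sphere_surface_measure_def)

lemma borel_measurable_sphere_surface_measure:
  "g \<in> borel_measurable borel \<Longrightarrow> g \<in> borel_measurable (sphere_surface_measure :: 'a::euclidean_space measure)"
  by (subst measurable_cong_sets[OF sets_sphere_surface_measure refl]) (rule measurable_restrict_space1)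

lemma integral_sphere_surface_measure:
  fixes g :: "'a::euclidean_space \<Rightarrow> 'b::{banach, second_countable_topology}"
  assumes "g \<in> borel_measurable borel"
  shows "integral\<^sup>L sphere_surface_measure g
    = real DIM('a) *\<^sub>R (LINT y:ball 0 1 - {0}|lborel. g (y /\<^sub>R norm y))"
proof -
  have g: "g \<in> borel_measurable (restrict_space borel (sphere (0::'a) 1))"
    using assms by (rule measurable_restrict_space1)
  have "integral\<^sup>L (sphere_surface_measure :: 'a measure) g
      = integral\<^sup>L (distr (restrict_space lborel (ball 0 1 - {0})) (restrict_space borel (sphere 0 1))
          (\<lambda>x. x /\<^sub>R norm x)) (\<lambda>x. real DIM('a) *\<^sub>R g x)"
    unfolding sphere_surface_measure_def using g by (intro integral_density) auto
  also have "\<dots> = integral\<^sup>L (restrict_space lborel (ball 0 1 - {0})) (\<lambda>y. real DIM('a) *\<^sub>R g (y /\<^sub>R norm y))"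
    using g by (intro integral_distr[OF normalize_measurable_cone]) auto
  also have "\<dots> = (LINT y:ball 0 1 - {0}|lborel. real DIM('a) *\<^sub>R g (y /\<^sub>R norm y))"
    unfolding set_lebesgue_integral_def by (rule integral_restrict_space) auto
  finally show ?thesis
    by (simp add: set_lebesgue_integral_def)
qed

lemma integrable_sphere_surface_measure:
  fixes g :: "'a::euclidean_space \<Rightarrow> 'b::{banach, second_countable_topology}"
  assumes "g \<in> borel_measurable borel" and bound: "\<And>x. norm (g x) \<le> B"
  shows "integrable sphere_surface_measure g"
proof -
  have g: "g \<in> borel_measurable (restrict_space borel (sphere (0::'a) 1))"
    using assms(1) by (rule measurable_restrict_space1)
  have "set_integrable lborel (ball 0 1 - {0}) (\<lambda>y::'a. real DIM('a) *\<^sub>R g (y /\<^sub>R norm y))"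
    using assms(1) bound fmeasurableI2[OF fmeasurable_unit_ball, of "ball 0 1 - {0}"]
    by (intro set_integrable_bounded_fmeasurable[where B = "real DIM('a) * B"]) auto
  then have "integrable (restrict_space lborel (ball 0 1 - {0})) (\<lambda>y::'a. real DIM('a) *\<^sub>R g (y /\<^sub>R norm y))"
    unfolding set_integrable_def by (subst integrable_restrict_space) auto
  then have "integrable (distr (restrict_space lborel (ball 0 1 - {0})) (restrict_space borel (sphere 0 1))
      (\<lambda>x. x /\<^sub>R norm x)) (\<lambda>x::'a. real DIM('a) *\<^sub>R g x)"
    using g by (subst integrable_distr_eq[OF normalize_measurable_cone]) auto
  then show ?thesis
    unfolding sphere_surface_measure_def using g by (subst integrable_density) auto
qed

lemma indicator_in_L2_sphere:
  "C \<in> sets borel \<Longrightarrow> (indicator C :: 'a::euclidean_space \<Rightarrow> complex) \<in> L2_sphere"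
  unfolding L2_sphere_def
  by (auto intro!: borel_measurable_sphere_surface_measure integrable_sphere_surface_measure[where B = 1]
      simp: indicator_def)

lemma herglotz_op_indicator_in_herglotz_space:
  "C \<in> sets borel \<Longrightarrow> herglotz_op (indicator C :: 'a::euclidean_space \<Rightarrow> complex) \<in> herglotz_space"
  unfolding herglotz_space_def using indicator_in_L2_sphere by blast

lemma herglotz_op_indicator:
  fixes C :: "'a::euclidean_space set"
  assumes "C \<in> sets borel"
  shows "herglotz_op (indicator C) x = complex_of_real (herglotz_const DIM('a) * real DIM('a)) *
    (LINT y:cone_over C|lborel. cis (x \<bullet> (y /\<^sub>R norm y)))"
proof -
  have "integral\<^sup>L sphere_surface_measure (\<lambda>\<xi>::'a. indicator C \<xi> * cis (x \<bullet> \<xi>))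
      = real DIM('a) *\<^sub>R (LINT y:ball 0 1 - {0}|lborel. indicator C (y /\<^sub>R norm y) * cis (x \<bullet> (y /\<^sub>R norm y)))"
    using assms by (intro integral_sphere_surface_measure) auto
  also have "(LINT y:ball 0 1 - {0}|lborel. indicator C (y /\<^sub>R norm y) * cis (x \<bullet> (y /\<^sub>R norm y)))
      = (LINT y:cone_over C|lborel. cis (x \<bullet> (y /\<^sub>R norm y)))"
    unfolding set_lebesgue_integral_def
    by (intro Bochner_Integration.integral_cong) (auto simp: cone_over_def indicator_def)
  finally show ?thesis
    unfolding herglotz_op_def by (simp add: scaleR_conv_of_real)
qed

lemma integral_mult_herglotz_indicators:
  fixes a :: "'a::euclidean_space \<Rightarrow> complex"
  assumes a: "integrable lborel a" and C1: "C1 \<in> sets borel" and C2: "C2 \<in> sets borel"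
  shows "(LINT x|lborel. a x * herglotz_op (indicator C1) x * cnj (herglotz_op (indicator C2) x))
    = complex_of_real ((herglotz_const DIM('a) * real DIM('a))\<^sup>2) *
      (LINT y:cone_over C1|lborel. LINT z:cone_over C2|lborel. fourier_integral a (y /\<^sub>R norm y - z /\<^sub>R norm z))"
proof -
  define k where "k = complex_of_real (herglotz_const DIM('a) * real DIM('a))"
  define V where "V x = (LINT z:cone_over C2|lborel. cis (- (x \<bullet> (z /\<^sub>R norm z))))" for x :: 'a
  have [measurable]: "a \<in> borel_measurable lborel" "C1 \<in> sets borel" "C2 \<in> sets borel"
    using a C1 C2 by auto
  have V_meas: "V \<in> borel_measurable lborel"
    unfolding V_def set_lebesgue_integral_def by measurable
  have "norm (V x) \<le> measure lborel (cone_over C2)" for x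
    unfolding V_def using fmeasurable_cone_over[OF C2] by (intro norm_set_integral_cis_le) auto
  then have aV: "integrable lborel (\<lambda>x. a x * V x)"
    using V_meas by (intro integrable_mult_bounded[OF a])
  have herglotz_C2: "cnj (herglotz_op (indicator C2) x) = k * V x" for x
    unfolding herglotz_op_indicator[OF C2] V_def k_def by (simp add: cnj_set_integral_cis)
  have inner: "(LINT x|lborel. (a x * V x) * cis (x \<bullet> (y /\<^sub>R norm y)))
      = (LINT z:cone_over C2|lborel. fourier_integral a (y /\<^sub>R norm y - z /\<^sub>R norm z))" for y :: 'a
  proof -
    have "(LINT x|lborel. (a x * V x) * cis (x \<bullet> (y /\<^sub>R norm y)))
        = (LINT x|lborel. (a x * cis (x \<bullet> (y /\<^sub>R norm y))) * V x)"
      by (simp add: mult_ac)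
    also have "\<dots> = (LINT z:cone_over C2|lborel. LINT x|lborel.
        (a x * cis (x \<bullet> (y /\<^sub>R norm y))) * cis (- (x \<bullet> (z /\<^sub>R norm z))))"
      unfolding V_def using fmeasurable_cone_over[OF C2]
      by (intro integral_mult_set_integral_swap integrable_mult_cis[OF a]) auto
    also have "\<dots> = (LINT z:cone_over C2|lborel. fourier_integral a (y /\<^sub>R norm y - z /\<^sub>R norm z))"
      by (simp add: fourier_integral_def mult.assoc cis_mult inner_diff_right)
    finally show ?thesis .
  qed
  have "(LINT x|lborel. a x * herglotz_op (indicator C1) x * cnj (herglotz_op (indicator C2) x))
      = k * k * (LINT x|lborel. (a x * V x) * (LINT y:cone_over C1|lborel. cis (x \<bullet> (y /\<^sub>R norm y))))"
    unfolding herglotz_C2 herglotz_op_indicator[OF C1] k_def[symmetric] by (simp add: mult_ac)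
  also have "(LINT x|lborel. (a x * V x) * (LINT y:cone_over C1|lborel. cis (x \<bullet> (y /\<^sub>R norm y))))
      = (LINT y:cone_over C1|lborel. LINT x|lborel. (a x * V x) * cis (x \<bullet> (y /\<^sub>R norm y)))"
    using fmeasurable_cone_over[OF C1] by (intro integral_mult_set_integral_swap[OF aV]) auto
  also have "\<dots> = (LINT y:cone_over C1|lborel. LINT z:cone_over C2|lborel.
      fourier_integral a (y /\<^sub>R norm y - z /\<^sub>R norm z))"
    by (simp only: inner)
  finally show ?thesis
    by (simp add: k_def power2_eq_square)
qed

lemma set_integral_cones_fourier_integral_eq_0:
  fixes a :: "'a::euclidean_space \<Rightarrow> complex"
  assumes a: "integrable lborel a"
    and orth: "\<forall>u\<in>herglotz_space. \<forall>v\<in>herglotz_space. (LINT x|lborel. a x * u x * cnj (v x)) = 0"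
    and C: "C1 \<in> sets borel" "C2 \<in> sets borel"
  shows "(LINT y:cone_over C1|lborel. LINT z:cone_over C2|lborel.
    fourier_integral a (y /\<^sub>R norm y - z /\<^sub>R norm z)) = 0"
proof -
  have "(LINT x|lborel. a x * herglotz_op (indicator C1) x * cnj (herglotz_op (indicator C2) x)) = 0"
    using orth herglotz_op_indicator_in_herglotz_space C by blast
  moreover have "herglotz_const DIM('a) * real DIM('a) \<noteq> 0"
    by (simp add: herglotz_const_def)
  ultimately show ?thesis
    unfolding integral_mult_herglotz_indicators[OF a C] by simp
qed

lemma fourier_integral_diff_of_unit_vectors_eq_0:
  fixes a :: "'a::euclidean_space \<Rightarrow> complex"
  assumes a: "integrable lborel a"
    and orth: "\<forall>u\<in>herglotz_space. \<forall>v\<in>herglotz_space. (LINT x|lborel. a x * u x * cnj (v x)) = 0"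
    and "norm \<xi> = 1" "norm \<eta> = 1"
  shows "fourier_integral a (\<xi> - \<eta>) = 0"
proof -
  define G where "G = fourier_integral a"
  have G_cont: "continuous_on UNIV G"
    unfolding G_def by (rule continuous_on_fourier_integral[OF a])
  have [measurable]: "G \<in> borel_measurable borel"
    using G_cont by (rule borel_measurable_continuous_onI)
  \<comment> \<open>average \<open>G\<close> over the differences of points of two shrinking cones around \<open>\<xi>\<close> and \<open>\<eta>\<close>\<close>
  have "norm (G (\<xi> - \<eta>)) \<le> \<epsilon>" if "\<epsilon> > 0" for \<epsilon>
  proof -
    obtain \<delta> where "\<delta> > 0" and \<delta>: "\<And>\<zeta>. dist \<zeta> (\<xi> - \<eta>) < \<delta> \<Longrightarrow> dist (G \<zeta>) (G (\<xi> - \<eta>)) < \<epsilon>"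
      using G_cont \<open>\<epsilon> > 0\<close> unfolding continuous_on_iff by (metis UNIV_I)
    define S1 where "S1 = cone_over (ball \<xi> (\<delta>/2))"
    define S2 where "S2 = cone_over (ball \<eta> (\<delta>/2))"
    have close: "norm (G (y /\<^sub>R norm y - z /\<^sub>R norm z) - G (\<xi> - \<eta>)) \<le> \<epsilon>" if "y \<in> S1" "z \<in> S2" for y z
    proof -
      have "dist (y /\<^sub>R norm y - z /\<^sub>R norm z) (\<xi> - \<eta>) \<le> dist (y /\<^sub>R norm y) \<xi> + dist (z /\<^sub>R norm z) \<eta>"
        using dist_triangle_add[of "y /\<^sub>R norm y" "- (z /\<^sub>R norm z)" \<xi> "- \<eta>"] by (simp add: dist_minus)
      also have "\<dots> < \<delta>/2 + \<delta>/2"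
        using that by (intro add_strict_mono) (auto simp: S1_def S2_def cone_over_def dist_commute)
      finally show ?thesis
        using \<delta> by (simp add: dist_norm less_imp_le)
    qed
    have S: "S1 \<in> fmeasurable lborel" "S2 \<in> fmeasurable lborel"
      unfolding S1_def S2_def by (simp_all add: fmeasurable_cone_over)
    have "(\<lambda>(y, z). G (y /\<^sub>R norm y - z /\<^sub>R norm z)) \<in> borel_measurable (lborel \<Otimes>\<^sub>M lborel)"
      by measurable
    from norm_double_set_integral_minus_const_le[OF S this close]
    have "norm (0 - (measure lborel S1 * measure lborel S2) *\<^sub>R G (\<xi> - \<eta>))
        \<le> measure lborel S1 * measure lborel S2 * \<epsilon>"
      using set_integral_cones_fourier_integral_eq_0[OF a orth, of "ball \<xi> (\<delta>/2)" "ball \<eta> (\<delta>/2)",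
          folded S1_def S2_def G_def]
      by simp
    moreover have "measure lborel S1 * measure lborel S2 > 0"
      unfolding S1_def S2_def using \<open>\<delta> > 0\<close>
      by (intro mult_pos_pos measure_cone_over_ball_pos \<open>norm \<xi> = 1\<close> \<open>norm \<eta> = 1\<close>) auto
    ultimately show ?thesis
      by (simp add: mult_le_cancel_left_pos)
  qed
  then show ?thesis
    using field_le_epsilon[of "norm (G (\<xi> - \<eta>))" 0] unfolding G_def by simp
qed

section \<open>Differences of unit vectors\<close>

lemma exists_unit_orthogonal:
  fixes z :: "'a::euclidean_space"
  assumes "DIM('a) \<ge> 2"
  obtains w where "norm w = 1" "w \<bullet> z = 0"
proof -
  obtain b1 :: 'a where "b1 \<in> Basis"
    using nonempty_Basis by blast
  moreover have "card (Basis - {b1} :: 'a set) \<ge> 1"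
    using assms \<open>b1 \<in> Basis\<close> by (simp add: card_Diff_singleton)
  then obtain b2 where "b2 \<in> Basis - {b1}"
    by (metis card.empty ex_in_conv not_one_le_zero)
  ultimately have b: "b1 \<in> Basis" "b2 \<in> Basis" "b1 \<noteq> b2"
    by auto
  \<comment> \<open>rotate the \<open>b1\<close>-\<open>b2\<close> components of \<open>z\<close> by a right angle\<close>
  define v where "v = (z \<bullet> b2) *\<^sub>R b1 - (z \<bullet> b1) *\<^sub>R b2"
  have "v \<bullet> z = 0"
    unfolding v_def inner_diff_left inner_scaleR_left inner_commute[of b1 z] inner_commute[of b2 z]
    by (simp add: mult.commute)
  show ?thesis
  proof (cases "v = 0")
    case False
    then show ?thesis
      using that[of "v /\<^sub>R norm v"] \<open>v \<bullet> z = 0\<close> by simp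
  next
    case True
    have "v \<bullet> b2 = - (z \<bullet> b1)"
      using b by (simp add: v_def inner_diff_left inner_Basis)
    with True have "z \<bullet> b1 = 0"
      by simp
    then show ?thesis
      using that[of b1] b by (simp add: inner_commute)
  qed
qed

lemma diff_of_unit_vectors:
  fixes z :: "'a::euclidean_space"
  assumes "DIM('a) \<ge> 2" and "norm z < 2"
  obtains x y where "norm x = 1" "norm y = 1" "x - y = z"
proof -
  obtain w :: 'a where w: "norm w = 1" "w \<bullet> z = 0"
    using exists_unit_orthogonal[OF assms(1)] by blast
  \<comment> \<open>\<open>x, y = \<plusminus>z/2 + s w\<close> with \<open>s\<^sup>2 = 1 - |z|\<^sup>2/4\<close>\<close>
  define s where "s = sqrt (1 - (norm z)\<^sup>2 / 4)"
  have "(norm z)\<^sup>2 < 2\<^sup>2"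
    using assms(2) by (intro power_strict_mono) auto
  then have s2: "s\<^sup>2 = 1 - (norm z)\<^sup>2 / 4"
    unfolding s_def by simp
  have inner: "w \<bullet> w = 1" "z \<bullet> z = (norm z)\<^sup>2" "z \<bullet> w = 0"
    using w by (simp_all add: power2_norm_eq_inner[symmetric] inner_commute)
  have unit: "norm (c *\<^sub>R z + s *\<^sub>R w) = 1" if "c\<^sup>2 = 1/4" for c
  proof -
    have "(c *\<^sub>R z + s *\<^sub>R w) \<bullet> (c *\<^sub>R z + s *\<^sub>R w) = c\<^sup>2 * (norm z)\<^sup>2 + s\<^sup>2"
      using inner w(2) by (simp add: inner_add_left inner_add_right power2_eq_square algebra_simps)
    also have "\<dots> = 1"
      using s2 that by simp
    finally show ?thesis
      by (simp add: norm_eq_sqrt_inner)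
  qed
  show ?thesis
  proof (rule that)
    show "norm ((1/2) *\<^sub>R z + s *\<^sub>R w) = 1" "norm ((-1/2) *\<^sub>R z + s *\<^sub>R w) = 1"
      using unit[of "1/2"] unit[of "-1/2"] by (simp_all add: power2_eq_square)
    have "((1/2) *\<^sub>R z + s *\<^sub>R w) - ((-1/2) *\<^sub>R z + s *\<^sub>R w) = (1/2 + 1/2) *\<^sub>R z"
      by (simp only: scaleR_add_left) (simp add: algebra_simps)
    then show "((1/2) *\<^sub>R z + s *\<^sub>R w) - ((-1/2) *\<^sub>R z + s *\<^sub>R w) = z"
      by simp
  qed
qed

theorem proposition5p3:
  fixes a :: "'a::euclidean_space \<Rightarrow> complex"
  assumes "DIM('a) \<ge> 2"
    and "integrable lborel a"
    and "\<exists>K. compact K \<and> (AE x in lborel. x \<notin> K \<longrightarrow> a x = 0)"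
    and "\<forall>u\<in>herglotz_space. \<forall>v\<in>herglotz_space.
           (LINT x|lborel. a x * u x * cnj (v x)) = 0"
  shows "AE x in lborel. a x = 0"
proof -
  obtain K where "compact K" and support: "AE x in lborel. x \<notin> K \<longrightarrow> a x = 0"
    using assms(3) by blast
  have "fourier_integral a \<zeta> = 0" if small: "norm \<zeta> < 2" for \<zeta> :: 'a
  proof -
    obtain \<xi> \<eta> :: 'a where "norm \<xi> = 1" "norm \<eta> = 1" "\<xi> - \<eta> = \<zeta>"
      using diff_of_unit_vectors[OF assms(1) small] .
    then show ?thesis
      using fourier_integral_diff_of_unit_vectors_eq_0[OF assms(2,4)] by blast
  qed
  then have "fourier_integral a \<zeta> = 0" for \<zeta>
    using fourier_integral_eq_0_if_vanishes_near_0[OF assms(2) \<open>compact K\<close> support, of 2] by simp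
  then show ?thesis
    by (rule AE_zero_if_fourier_integral_eq_0[OF assms(2) \<open>compact K\<close> support])
qed

end
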